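(* Let $D\geq 3$ be an integer, let $n\geq 1$, and let $A\subset(\mathbb{Z}/D\mathbb{Z})^{n}$ be a sunflower-free set. Then \[ |A|\leq c_{D}^{n},\qquad\text{where } c_{D}=\frac{3}{2^{2/3}}(D-1)^{2/3}. \]
   Context: A set $A\subset(\mathbb{Z}/D\mathbb{Z})^{n}$ is called sunflower-free if for every triple of distinct elements $x,y,z\in A$ there exists a coordinate $i\in\{1,\dots,n\}$ such that exactly two of $x_i,y_i,z_i$ are equal. (Equivalently, $A$ contains no three distinct vectors which, in every coordinate, are either all equal or all pairwise different.) *)

theory Defs
  imports Complex_Main
begin

text \<open>The group (Z/DZ)^n, represented as functions nat => nat whose values at
  coordinates i < n lie in {0..<D} (residues), and which are 0 outside {0..<n}.\<close>
definition ZDn :: "nat \<Rightarrow> nat \<Rightarrow> (nat \<Rightarrow> nat) set" where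
  "ZDn D n = {x. (\<forall>i<n. x i < D) \<and> (\<forall>i\<ge>n. x i = 0)}"

definition sunflower_free :: "nat \<Rightarrow> (nat \<Rightarrow> nat) set \<Rightarrow> bool" where
  "sunflower_free n A \<longleftrightarrow>
     (\<forall>x\<in>A. \<forall>y\<in>A. \<forall>z\<in>A. x \<noteq> y \<and> y \<noteq> z \<and> x \<noteq> z \<longrightarrow>
        (\<exists>i<n. (x i = y i \<and> y i \<noteq> z i) \<or> (x i = z i \<and> x i \<noteq> y i)
               \<or> (y i = z i \<and> x i \<noteq> y i)))"

end

theory Submission
  imports Defs "HOL-Library.FuncSet"
begin

(*
  Tao's slice-rank form of the Naslund-Sawin argument. For a sunflower-free A, the tensor
  T(x, y, z) = prod_i g(x_i, y_i, z_i) with g(a, b, c) = 1 - [a = b] - [b = c] - [a = c]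
  is (-2)^n on the diagonal of A and vanishes elsewhere on A^3, so |A| is at most the slice
  rank of T. In the basis {1} and [. = a] (0 < a < D) of functions on Z/DZ, g is a sum of
  functions of two variables, so every term of g has a constant factor; hence every monomial
  term of T has total degree at most 2n and degree at most 2n/3 in one of its variables.
  Slicing each term along such a variable gives |A| <= 3 N, where N counts the monomials of
  degree at most 2n/3; weighting monomials by t^degree with t = 2/(D-1) gives N <= c_D^n.
  Applying this to the sunflower-free powers A^m removes the factor 3.
*)

section \<open>Slice rank of a diagonal tensor\<close>

lemma annihilating_indicators_exist:
  fixes A :: "'a set" and F :: "('a \<Rightarrow> real) set"
  assumes "finite F"
  shows "\<exists>B\<subseteq>A. finite B \<and> card B \<le> card F \<and>
    (\<forall>a\<in>A - B. \<exists>h. (\<forall>f\<in>F. (\<Sum>z\<in>A. f z * h z) = 0) \<and>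
                     (\<forall>z\<in>A - B. h z = (if z = a then 1 else 0)))"
  using assms
proof (induction F rule: finite_induct)
  case empty
  show ?case
    by (rule exI[of _ "{}"]) (auto intro!: exI[of _ "\<lambda>z. if z = a then 1 else 0" for a])
next
  case (insert f F)
  then obtain B where B: "B \<subseteq> A" "finite B" "card B \<le> card F"
    and "\<forall>a\<in>A - B. \<exists>h. (\<forall>f\<in>F. (\<Sum>z\<in>A. f z * h z) = 0) \<and>
                         (\<forall>z\<in>A - B. h z = (if z = a then 1 else 0))"
    by blast
  then obtain h where h: "\<And>a. a \<in> A - B \<Longrightarrow> (\<forall>f\<in>F. (\<Sum>z\<in>A. f z * h a z) = 0) \<and>
                                             (\<forall>z\<in>A - B. h a z = (if z = a then 1 else 0))"
    by metis
  define s where "s a = (\<Sum>z\<in>A. f z * h a z)" for a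
  show ?case
  proof (cases "\<forall>a\<in>A - B. s a = 0")
    case True
    with B h insert.hyps show ?thesis
      unfolding s_def by (intro exI[of _ B]) (auto intro!: exI[of _ "h a" for a])
  next
    case False
    then obtain a0 where a0: "a0 \<in> A - B" "s a0 \<noteq> 0" by blast
    \<comment> \<open>Gaussian elimination with pivot a0: subtracting a multiple of h a0 clears f.\<close>
    have "\<exists>h'. (\<forall>g\<in>insert f F. (\<Sum>z\<in>A. g z * h' z) = 0) \<and>
               (\<forall>z\<in>A - insert a0 B. h' z = (if z = a then 1 else 0))"
      if a: "a \<in> A - insert a0 B" for a
    proof (intro exI conjI ballI)
      let ?h' = "\<lambda>z. h a z - s a / s a0 * h a0 z"
      fix g assume g: "g \<in> insert f F"
      have "(\<Sum>z\<in>A. g z * ?h' z) = (\<Sum>z\<in>A. g z * h a z) - s a / s a0 * (\<Sum>z\<in>A. g z * h a0 z)"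
        by (simp add: algebra_simps sum_subtractf sum_distrib_left)
      then show "(\<Sum>z\<in>A. g z * ?h' z) = 0"
        using g h[of a] h[of a0] a a0 unfolding s_def by auto
    next
      fix z assume "z \<in> A - insert a0 B"
      then show "h a z - s a / s a0 * h a0 z = (if z = a then 1 else 0)"
        using h[of a] h[of a0] a a0 by auto
    qed
    with a0 B insert.hyps show ?thesis
      by (intro exI[of _ "insert a0 B"]) (auto simp: card_insert_if)
  qed
qed

lemma triple_sum_annihilated:
  assumes "\<And>i. i \<in> I \<Longrightarrow> (\<Sum>x\<in>X. f i x * h x) = 0"
  shows "(\<Sum>x\<in>X. \<Sum>y\<in>Y. \<Sum>z\<in>Z. (\<Sum>i\<in>I. f i x * g i y z) * (h x * k y z)) = (0::real)"
proof -
  have "(\<Sum>x\<in>X. \<Sum>y\<in>Y. \<Sum>z\<in>Z. (\<Sum>i\<in>I. f i x * g i y z) * (h x * k y z))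
      = (\<Sum>x\<in>X. \<Sum>y\<in>Y. \<Sum>z\<in>Z. \<Sum>i\<in>I. f i x * h x * (g i y z * k y z))"
    by (simp add: sum_distrib_left sum_distrib_right mult_ac)
  also have "\<dots> = (\<Sum>x\<in>X. \<Sum>y\<in>Y. \<Sum>i\<in>I. \<Sum>z\<in>Z. f i x * h x * (g i y z * k y z))"
    by (rule sum.cong[OF refl], rule sum.cong[OF refl], rule sum.swap)
  also have "\<dots> = (\<Sum>x\<in>X. \<Sum>i\<in>I. \<Sum>y\<in>Y. \<Sum>z\<in>Z. f i x * h x * (g i y z * k y z))"
    by (rule sum.cong[OF refl], rule sum.swap)
  also have "\<dots> = (\<Sum>i\<in>I. \<Sum>x\<in>X. \<Sum>y\<in>Y. \<Sum>z\<in>Z. f i x * h x * (g i y z * k y z))"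
    by (rule sum.swap)
  also have "\<dots> = (\<Sum>i\<in>I. \<Sum>x\<in>X. f i x * h x * (\<Sum>y\<in>Y. \<Sum>z\<in>Z. g i y z * k y z))"
    by (simp add: sum_distrib_left)
  also have "\<dots> = (\<Sum>i\<in>I. (\<Sum>x\<in>X. f i x * h x) * (\<Sum>y\<in>Y. \<Sum>z\<in>Z. g i y z * k y z))"
    by (simp add: sum_distrib_right)
  also have "\<dots> = 0" using assms by simp
  finally show ?thesis .
qed

lemma slice_decomposition_pairing_eq_0:
  fixes c :: "'a \<Rightarrow> real"
    and f1 :: "'i1 \<Rightarrow> 'a \<Rightarrow> real" and f2 :: "'i2 \<Rightarrow> 'a \<Rightarrow> real" and f3 :: "'i3 \<Rightarrow> 'a \<Rightarrow> real"
  assumes "X \<subseteq> A" "Y \<subseteq> A" "Z \<subseteq> A"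
    and decomp: "\<And>x y z. x \<in> A \<Longrightarrow> y \<in> A \<Longrightarrow> z \<in> A \<Longrightarrow>
      (if x = y \<and> y = z then c x else 0) =
        (\<Sum>i\<in>I1. f1 i x * g1 i y z) + (\<Sum>i\<in>I2. f2 i y * g2 i x z) + (\<Sum>i\<in>I3. f3 i z * g3 i x y)"
    and hx: "\<And>i. i \<in> I1 \<Longrightarrow> (\<Sum>x\<in>X. f1 i x * hx x) = 0"
    and hy: "\<And>i. i \<in> I2 \<Longrightarrow> (\<Sum>y\<in>Y. f2 i y * hy y) = 0"
    and hz: "\<And>i. i \<in> I3 \<Longrightarrow> (\<Sum>z\<in>Z. f3 i z * hz z) = 0"
  shows "(\<Sum>x\<in>X. \<Sum>y\<in>Y. \<Sum>z\<in>Z. if x = y \<and> y = z then c x * (hx x * hy y * hz z) else 0) = 0"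
proof -
  have term1: "(\<Sum>x\<in>X. \<Sum>y\<in>Y. \<Sum>z\<in>Z. (\<Sum>i\<in>I1. f1 i x * g1 i y z) * (hx x * hy y * hz z)) = 0"
    using triple_sum_annihilated[where I = I1 and f = f1 and h = hx and k = "\<lambda>y z. hy y * hz z"] hx
    by (simp add: mult.assoc)
  have "(\<Sum>x\<in>X. \<Sum>y\<in>Y. \<Sum>z\<in>Z. (\<Sum>i\<in>I2. f2 i y * g2 i x z) * (hx x * hy y * hz z))
      = (\<Sum>y\<in>Y. \<Sum>x\<in>X. \<Sum>z\<in>Z. (\<Sum>i\<in>I2. f2 i y * g2 i x z) * (hy y * (hx x * hz z)))"
    by (subst sum.swap) (simp add: mult_ac)
  also have "\<dots> = 0"
    using hy by (rule triple_sum_annihilated)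
  finally have term2: "(\<Sum>x\<in>X. \<Sum>y\<in>Y. \<Sum>z\<in>Z. (\<Sum>i\<in>I2. f2 i y * g2 i x z) * (hx x * hy y * hz z)) = 0" .
  have "(\<Sum>x\<in>X. \<Sum>y\<in>Y. \<Sum>z\<in>Z. (\<Sum>i\<in>I3. f3 i z * g3 i x y) * (hx x * hy y * hz z))
      = (\<Sum>x\<in>X. \<Sum>z\<in>Z. \<Sum>y\<in>Y. (\<Sum>i\<in>I3. f3 i z * g3 i x y) * (hx x * hy y * hz z))"
    by (rule sum.cong[OF refl], rule sum.swap)
  also have "\<dots> = (\<Sum>z\<in>Z. \<Sum>x\<in>X. \<Sum>y\<in>Y. (\<Sum>i\<in>I3. f3 i z * g3 i x y) * (hz z * (hx x * hy y)))"
    by (subst sum.swap) (simp add: mult_ac)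
  also have "\<dots> = 0"
    using hz by (rule triple_sum_annihilated)
  finally have term3: "(\<Sum>x\<in>X. \<Sum>y\<in>Y. \<Sum>z\<in>Z. (\<Sum>i\<in>I3. f3 i z * g3 i x y) * (hx x * hy y * hz z)) = 0" .
  have "(\<Sum>x\<in>X. \<Sum>y\<in>Y. \<Sum>z\<in>Z. if x = y \<and> y = z then c x * (hx x * hy y * hz z) else 0)
      = (\<Sum>x\<in>X. \<Sum>y\<in>Y. \<Sum>z\<in>Z.
          ((\<Sum>i\<in>I1. f1 i x * g1 i y z) + (\<Sum>i\<in>I2. f2 i y * g2 i x z) + (\<Sum>i\<in>I3. f3 i z * g3 i x y))
          * (hx x * hy y * hz z))"
  proof (intro sum.cong refl)
    fix x y z assume "x \<in> X" "y \<in> Y" "z \<in> Z"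
    with assms(1-3) have "x \<in> A" "y \<in> A" "z \<in> A" by auto
    then show "(if x = y \<and> y = z then c x * (hx x * hy y * hz z) else 0)
        = ((\<Sum>i\<in>I1. f1 i x * g1 i y z) + (\<Sum>i\<in>I2. f2 i y * g2 i x z) + (\<Sum>i\<in>I3. f3 i z * g3 i x y))
          * (hx x * hy y * hz z)"
      by (simp flip: decomp)
  qed
  also have "\<dots> = 0"
    using term1 term2 term3 by (simp add: distrib_right sum.distrib)
  finally show ?thesis .
qed

lemma sum_triple_diagonal:
  assumes "finite Z" "X \<subseteq> Y" "Y \<subseteq> Z"
  shows "(\<Sum>x\<in>X. \<Sum>y\<in>Y. \<Sum>z\<in>Z. if x = y \<and> y = z then F x y z else 0) = (\<Sum>x\<in>X. F x x x)"
proof (rule sum.cong[OF refl])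
  fix x assume "x \<in> X"
  with assms have "x \<in> Y" "x \<in> Z" "finite Y" by (auto intro: finite_subset)
  have "(\<Sum>z\<in>Z. if x = y \<and> y = z then F x y z else 0) = (if y = x then F x x x else 0)" for y
    using \<open>finite Z\<close> \<open>x \<in> Z\<close> by (cases "y = x") (simp_all add: sum.delta)
  with \<open>finite Y\<close> \<open>x \<in> Y\<close> show "(\<Sum>y\<in>Y. \<Sum>z\<in>Z. if x = y \<and> y = z then F x y z else 0) = F x x x"
    by (simp add: sum.delta)
qed

lemma card_le_slice_decomposition:
  fixes A :: "'a set" and c :: "'a \<Rightarrow> real"
    and f1 :: "'i1 \<Rightarrow> 'a \<Rightarrow> real" and f2 :: "'i2 \<Rightarrow> 'a \<Rightarrow> real" and f3 :: "'i3 \<Rightarrow> 'a \<Rightarrow> real"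
  assumes "finite A" "finite I1" "finite I2" "finite I3"
    and c_nonzero: "\<And>x. x \<in> A \<Longrightarrow> c x \<noteq> 0"
    and decomp: "\<And>x y z. x \<in> A \<Longrightarrow> y \<in> A \<Longrightarrow> z \<in> A \<Longrightarrow>
      (if x = y \<and> y = z then c x else 0) =
        (\<Sum>i\<in>I1. f1 i x * g1 i y z) + (\<Sum>i\<in>I2. f2 i y * g2 i x z) + (\<Sum>i\<in>I3. f3 i z * g3 i x y)"
  shows "card A \<le> card (f1 ` I1) + card (f2 ` I2) + card (f3 ` I3)"
proof -
  obtain B3 where B3: "B3 \<subseteq> A" "card B3 \<le> card (f3 ` I3)"
    and H3: "\<forall>a\<in>A - B3. \<exists>h. (\<forall>f\<in>f3 ` I3. (\<Sum>z\<in>A. f z * h z) = 0) \<and>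
                              (\<forall>z\<in>A - B3. h z = (if z = a then 1 else 0))"
    using annihilating_indicators_exist[of "f3 ` I3" A] \<open>finite I3\<close> by blast
  define S3 where "S3 = A - B3"
  obtain B2 where B2: "B2 \<subseteq> S3" "card B2 \<le> card (f2 ` I2)"
    and H2: "\<forall>a\<in>S3 - B2. \<exists>h. (\<forall>f\<in>f2 ` I2. (\<Sum>y\<in>S3. f y * h y) = 0) \<and>
                               (\<forall>y\<in>S3 - B2. h y = (if y = a then 1 else 0))"
    using annihilating_indicators_exist[of "f2 ` I2" S3] \<open>finite I2\<close> by blast
  define S2 where "S2 = S3 - B2"
  obtain B1 where B1: "B1 \<subseteq> S2" "card B1 \<le> card (f1 ` I1)"
    and H1: "\<forall>a\<in>S2 - B1. \<exists>h. (\<forall>f\<in>f1 ` I1. (\<Sum>x\<in>S2. f x * h x) = 0) \<and>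
                               (\<forall>x\<in>S2 - B1. h x = (if x = a then 1 else 0))"
    using annihilating_indicators_exist[of "f1 ` I1" S2] \<open>finite I1\<close> by blast
  have S: "S2 \<subseteq> S3" "S3 \<subseteq> A" "finite S2" "finite S3"
    unfolding S2_def S3_def using \<open>finite A\<close> by auto
  have "S2 - B1 = {}"
  proof (rule ccontr)
    assume "S2 - B1 \<noteq> {}"
    then obtain e where e: "e \<in> S2 - B1" by blast
    then have "e \<in> S3 - B2" "e \<in> A - B3" unfolding S2_def S3_def by auto
    obtain hz where hz: "\<forall>f\<in>f3 ` I3. (\<Sum>z\<in>A. f z * hz z) = 0"
        "\<forall>z\<in>A - B3. hz z = (if z = e then 1 else 0)"
      using H3 \<open>e \<in> A - B3\<close> by blast
    obtain hy where hy: "\<forall>f\<in>f2 ` I2. (\<Sum>y\<in>S3. f y * hy y) = 0"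
        "\<forall>y\<in>S3 - B2. hy y = (if y = e then 1 else 0)"
      using H2 \<open>e \<in> S3 - B2\<close> by blast
    obtain hx where hx: "\<forall>f\<in>f1 ` I1. (\<Sum>x\<in>S2. f x * hx x) = 0"
        "\<forall>x\<in>S2 - B1. hx x = (if x = e then 1 else 0)"
      using H1 e by blast
    \<comment> \<open>hx \<otimes> hy \<otimes> hz pairs to c e with the diagonal tensor but to 0 with each slice.\<close>
    define Q where "Q = (\<Sum>x\<in>S2. \<Sum>y\<in>S3. \<Sum>z\<in>A.
      if x = y \<and> y = z then c x * (hx x * hy y * hz z) else 0)"
    have "Q = (\<Sum>x\<in>S2. c x * (hx x * hy x * hz x))"
      unfolding Q_def using S \<open>finite A\<close> by (intro sum_triple_diagonal)
    also have "\<dots> = (\<Sum>x\<in>S2. if x = e then c e else 0)"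
      using hx hy hz e S unfolding S2_def S3_def by (intro sum.cong refl) auto
    also have "\<dots> = c e"
      using S e by simp
    finally have "Q = c e" .
    moreover have "Q = 0"
      unfolding Q_def using S hx(1) hy(1) hz(1)
      by (intro slice_decomposition_pairing_eq_0[OF _ _ _ decomp]) auto
    ultimately show False using c_nonzero e S by auto
  qed
  then have "A \<subseteq> B1 \<union> B2 \<union> B3" unfolding S2_def S3_def by blast
  then have "card A \<le> card (B1 \<union> B2 \<union> B3)"
    using B1 B2 B3 S \<open>finite A\<close> by (intro card_mono) (auto intro: finite_subset)
  also have "\<dots> \<le> card B1 + card B2 + card B3"
    using card_Un_le[of "B1 \<union> B2" B3] card_Un_le[of B1 B2] by linarith
  finally show ?thesis using B1 B2 B3 by linarith
qed

section \<open>Expansion of the coordinate kernel\<close>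

(* Index 0 is the constant function 1 and index a > 0 the indicator of a, so the degree of a
   monomial counts its non-constant factors. *)
definition ebasis :: "nat \<Rightarrow> nat \<Rightarrow> real" where
  "ebasis a u = (if a = 0 \<or> u = a then 1 else 0)"

definition ecoeff :: "(nat \<Rightarrow> real) \<Rightarrow> nat \<Rightarrow> real" where
  "ecoeff \<psi> a = (if a = 0 then \<psi> 0 else \<psi> a - \<psi> 0)"

lemma ebasis_expansion:
  assumes "u < D"
  shows "\<psi> u = (\<Sum>a<D. ecoeff \<psi> a * ebasis a u)"
proof -
  obtain D' where D: "D = Suc D'" using assms by (cases D) auto
  have "(\<Sum>a<D. ecoeff \<psi> a * ebasis a u) = \<psi> 0 + (\<Sum>a<D'. if a = u - 1 \<and> u \<noteq> 0 then \<psi> u - \<psi> 0 else 0)"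
    unfolding D sum.lessThan_Suc_shift by (intro arg_cong2[where f = "(+)"] sum.cong) (auto simp: ecoeff_def ebasis_def)
  also have "\<dots> = \<psi> u"
    using assms D by (cases "u = 0") (auto simp: sum.delta)
  finally show ?thesis by simp
qed

definition ecoeff3 :: "(nat \<Rightarrow> nat \<Rightarrow> nat \<Rightarrow> real) \<Rightarrow> nat \<times> nat \<times> nat \<Rightarrow> real" where
  "ecoeff3 g = (\<lambda>(a, b, c). ecoeff (\<lambda>\<gamma>. ecoeff (\<lambda>\<beta>. ecoeff (\<lambda>\<alpha>. g \<alpha> \<beta> \<gamma>) a) b) c)"

lemma ebasis_expansion3:
  assumes "\<alpha> < D" "\<beta> < D" "\<gamma> < D"
  shows "g \<alpha> \<beta> \<gamma> = (\<Sum>(a, b, c)\<in>{..<D} \<times> {..<D} \<times> {..<D}.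
            ecoeff3 g (a, b, c) * ebasis a \<alpha> * ebasis b \<beta> * ebasis c \<gamma>)"
proof -
  have "g \<alpha> \<beta> \<gamma> = (\<Sum>a<D. ecoeff (\<lambda>\<alpha>. g \<alpha> \<beta> \<gamma>) a * ebasis a \<alpha>)"
    using assms(1) by (rule ebasis_expansion)
  also have "\<dots> = (\<Sum>a<D. (\<Sum>b<D. ecoeff (\<lambda>\<beta>. ecoeff (\<lambda>\<alpha>. g \<alpha> \<beta> \<gamma>) a) b * ebasis b \<beta>) * ebasis a \<alpha>)"
    using assms(2) by (intro sum.cong refl arg_cong2[where f = "(*)"] ebasis_expansion)
  also have "\<dots> = (\<Sum>a<D. (\<Sum>b<D. (\<Sum>c<D. ecoeff3 g (a, b, c) * ebasis c \<gamma>) * ebasis b \<beta>) * ebasis a \<alpha>)"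
    unfolding ecoeff3_def using assms(3)
    by (intro sum.cong refl arg_cong2[where f = "(*)"]) (simp add: ebasis_expansion[symmetric])
  also have "\<dots> = (\<Sum>(a, b, c)\<in>{..<D} \<times> {..<D} \<times> {..<D}.
            ecoeff3 g (a, b, c) * ebasis a \<alpha> * ebasis b \<beta> * ebasis c \<gamma>)"
    by (simp add: sum.cartesian_product[symmetric] sum_distrib_left sum_distrib_right mult_ac)
  finally show ?thesis .
qed

lemma ecoeff3_eq_0_if_pairwise:
  assumes "\<And>\<alpha> \<beta> \<gamma>. g \<alpha> \<beta> \<gamma> = p \<alpha> \<beta> + q \<beta> \<gamma> + r \<alpha> \<gamma>" and "a \<noteq> 0" "b \<noteq> 0" "c \<noteq> 0"
  shows "ecoeff3 g (a, b, c) = 0"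
  using assms by (simp add: ecoeff3_def ecoeff_def)

definition exactly_two_eq :: "'a \<Rightarrow> 'a \<Rightarrow> 'a \<Rightarrow> bool" where
  "exactly_two_eq a b c \<longleftrightarrow> (a = b \<and> b \<noteq> c) \<or> (a = c \<and> a \<noteq> b) \<or> (b = c \<and> a \<noteq> b)"

definition sunflower_kernel :: "nat \<Rightarrow> nat \<Rightarrow> nat \<Rightarrow> real" where
  "sunflower_kernel \<alpha> \<beta> \<gamma> = 1 - of_bool (\<alpha> = \<beta>) - of_bool (\<beta> = \<gamma>) - of_bool (\<alpha> = \<gamma>)"

lemma sunflower_kernel_diag: "sunflower_kernel \<alpha> \<alpha> \<alpha> = -2"
  by (simp add: sunflower_kernel_def)

lemma sunflower_kernel_eq_0: "exactly_two_eq \<alpha> \<beta> \<gamma> \<Longrightarrow> sunflower_kernel \<alpha> \<beta> \<gamma> = 0"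
  by (auto simp: exactly_two_eq_def sunflower_kernel_def)

definition term_indices :: "nat \<Rightarrow> (nat \<times> nat \<times> nat) set" where
  "term_indices D = {(a, b, c). a < D \<and> b < D \<and> c < D \<and> (a = 0 \<or> b = 0 \<or> c = 0)}"

lemma finite_term_indices: "finite (term_indices D)"
  by (rule finite_subset[of _ "{..<D} \<times> {..<D} \<times> {..<D}"]) (auto simp: term_indices_def)

lemma sunflower_kernel_expansion:
  assumes "\<alpha> < D" "\<beta> < D" "\<gamma> < D"
  shows "sunflower_kernel \<alpha> \<beta> \<gamma> = (\<Sum>k\<in>term_indices D. ecoeff3 sunflower_kernel k *
            ebasis (fst k) \<alpha> * ebasis (fst (snd k)) \<beta> * ebasis (snd (snd k)) \<gamma>)"
proof -
  have zero: "ecoeff3 sunflower_kernel (a, b, c) = 0"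
    if "(a, b, c) \<notin> term_indices D" "a < D" "b < D" "c < D" for a b c
  proof (rule ecoeff3_eq_0_if_pairwise)
    show "sunflower_kernel \<alpha> \<beta> \<gamma> = (1 - of_bool (\<alpha> = \<beta>)) + - of_bool (\<beta> = \<gamma>) + - of_bool (\<alpha> = \<gamma>)"
      for \<alpha> \<beta> \<gamma> by (simp add: sunflower_kernel_def)
    show "a \<noteq> 0" "b \<noteq> 0" "c \<noteq> 0" using that by (auto simp: term_indices_def)
  qed
  have "(\<Sum>k\<in>term_indices D. ecoeff3 sunflower_kernel k *
            ebasis (fst k) \<alpha> * ebasis (fst (snd k)) \<beta> * ebasis (snd (snd k)) \<gamma>)
      = (\<Sum>(a, b, c)\<in>{..<D} \<times> {..<D} \<times> {..<D}.
            ecoeff3 sunflower_kernel (a, b, c) * ebasis a \<alpha> * ebasis b \<beta> * ebasis c \<gamma>)"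
    by (rule sum.mono_neutral_cong_left) (auto simp: zero, auto simp: term_indices_def)
  with ebasis_expansion3[OF assms] show ?thesis by simp
qed

section \<open>Monomials and their degrees\<close>

definition monomial :: "'i set \<Rightarrow> ('i \<Rightarrow> nat) \<Rightarrow> ('i \<Rightarrow> nat) \<Rightarrow> real" where
  "monomial I p x = (\<Prod>i\<in>I. ebasis (p i) (x i))"

definition mon_degree :: "'i set \<Rightarrow> ('i \<Rightarrow> nat) \<Rightarrow> nat" where
  "mon_degree I p = card {i \<in> I. p i \<noteq> 0}"

definition sunflower_tensor :: "'i set \<Rightarrow> ('i \<Rightarrow> nat) \<Rightarrow> ('i \<Rightarrow> nat) \<Rightarrow> ('i \<Rightarrow> nat) \<Rightarrow> real" where
  "sunflower_tensor I x y z = (\<Prod>i\<in>I. sunflower_kernel (x i) (y i) (z i))"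

lemma sunflower_tensor_expansion:
  assumes "finite I" and "x \<in> PiE I (\<lambda>_. {..<D})" "y \<in> PiE I (\<lambda>_. {..<D})" "z \<in> PiE I (\<lambda>_. {..<D})"
  shows "sunflower_tensor I x y z = (\<Sum>\<tau>\<in>PiE I (\<lambda>_. term_indices D).
           (\<Prod>i\<in>I. ecoeff3 sunflower_kernel (\<tau> i)) * monomial I (fst \<circ> \<tau>) x *
           monomial I (fst \<circ> snd \<circ> \<tau>) y * monomial I (snd \<circ> snd \<circ> \<tau>) z)"
proof -
  have "sunflower_tensor I x y z = (\<Prod>i\<in>I. \<Sum>k\<in>term_indices D. ecoeff3 sunflower_kernel k *
           ebasis (fst k) (x i) * ebasis (fst (snd k)) (y i) * ebasis (snd (snd k)) (z i))"
    unfolding sunflower_tensor_def using assms(2-4)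
    by (intro prod.cong refl sunflower_kernel_expansion) auto
  also have "\<dots> = (\<Sum>\<tau>\<in>PiE I (\<lambda>_. term_indices D). \<Prod>i\<in>I. ecoeff3 sunflower_kernel (\<tau> i) *
           ebasis (fst (\<tau> i)) (x i) * ebasis (fst (snd (\<tau> i))) (y i) * ebasis (snd (snd (\<tau> i))) (z i))"
    using \<open>finite I\<close> finite_term_indices by (rule prod_sum_PiE)
  also have "\<dots> = (\<Sum>\<tau>\<in>PiE I (\<lambda>_. term_indices D).
           (\<Prod>i\<in>I. ecoeff3 sunflower_kernel (\<tau> i)) * monomial I (fst \<circ> \<tau>) x *
           monomial I (fst \<circ> snd \<circ> \<tau>) y * monomial I (snd \<circ> snd \<circ> \<tau>) z)"
    by (simp add: monomial_def prod.distrib)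
  finally show ?thesis .
qed

lemma mon_degree_terms_le:
  assumes "finite I" "\<tau> \<in> PiE I (\<lambda>_. term_indices D)"
  shows "mon_degree I (fst \<circ> \<tau>) + mon_degree I (fst \<circ> snd \<circ> \<tau>) + mon_degree I (snd \<circ> snd \<circ> \<tau>)
           \<le> 2 * card I"
proof -
  have card_eq: "card {i \<in> I. P i} = (\<Sum>i\<in>I. of_bool (P i))" for P
    using \<open>finite I\<close> by (simp add: Int_def)
  have "mon_degree I (fst \<circ> \<tau>) + mon_degree I (fst \<circ> snd \<circ> \<tau>) + mon_degree I (snd \<circ> snd \<circ> \<tau>)
      = (\<Sum>i\<in>I. of_bool (fst (\<tau> i) \<noteq> 0) + of_bool (fst (snd (\<tau> i)) \<noteq> 0) + of_bool (snd (snd (\<tau> i)) \<noteq> 0))"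
    unfolding mon_degree_def card_eq by (simp add: sum.distrib)
  also have "\<dots> \<le> (\<Sum>i\<in>I. 2)"
  proof (rule sum_mono)
    fix i assume "i \<in> I"
    with assms(2) have "\<tau> i \<in> term_indices D" by auto
    then show "of_bool (fst (\<tau> i) \<noteq> 0) + of_bool (fst (snd (\<tau> i)) \<noteq> 0) + of_bool (snd (snd (\<tau> i)) \<noteq> 0) \<le> (2::nat)"
      by (cases "\<tau> i") (auto simp: term_indices_def)
  qed
  finally show ?thesis by simp
qed

definition low_degree :: "'i set \<Rightarrow> nat \<Rightarrow> ('i \<Rightarrow> nat) set" where
  "low_degree I D = {p \<in> PiE I (\<lambda>_. {..<D}). 3 * mon_degree I p \<le> 2 * card I}"

lemma sum_power_mon_degree:
  assumes "finite I" "D \<ge> 1"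
  shows "(\<Sum>p\<in>PiE I (\<lambda>_. {..<D}). t ^ mon_degree I p) = (1 + (real D - 1) * t) ^ card I"
proof -
  obtain D' where D: "D = Suc D'" using assms(2) by (cases D) auto
  have "(\<Sum>p\<in>PiE I (\<lambda>_. {..<D}). t ^ mon_degree I p)
      = (\<Sum>p\<in>PiE I (\<lambda>_. {..<D}). \<Prod>i\<in>I. if p i \<noteq> 0 then t else 1)"
    unfolding mon_degree_def using \<open>finite I\<close> by (simp add: prod.inter_filter[symmetric])
  also have "\<dots> = (\<Prod>i\<in>I. \<Sum>a<D. if a \<noteq> 0 then t else 1)"
    using \<open>finite I\<close> by (rule prod_sum_PiE[symmetric]) auto
  also have "\<dots> = (1 + (real D - 1) * t) ^ card I"
    unfolding D sum.lessThan_Suc_shift by simp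
  finally show ?thesis .
qed

definition sunflower_base :: "nat \<Rightarrow> real" where
  "sunflower_base D = 3 / 2 powr (2/3) * (real D - 1) powr (2/3)"

lemma card_low_degree_le:
  assumes "finite I" "D \<ge> 3"
  shows "real (card (low_degree I D)) \<le> sunflower_base D ^ card I"
proof -
  define N where "N = card I"
  \<comment> \<open>Chernoff-type weighting; t = 2/(D-1) minimizes (1 + (D-1)t) / t^(2/3).\<close>
  define t :: real where "t = 2 / (real D - 1)"
  have t: "0 < t" "t \<le> 1" "1 + (real D - 1) * t = 3"
    unfolding t_def using assms(2) by (auto simp: field_simps)
  have t_powr: "t powr (2 * real N / 3) = (t powr (2/3)) ^ N"
    using t by (simp add: powr_realpow[symmetric] powr_powr mult_ac)
  have base_t: "sunflower_base D * t powr (2/3) = 3"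
  proof -
    have "t powr (2/3) = 2 powr (2/3) / (real D - 1) powr (2/3)"
      unfolding t_def using assms(2) by (simp add: powr_divide)
    moreover have "(real D - 1) powr (2/3) > 0" "2 powr (2/3::real) > 0" using assms(2) by auto
    ultimately show ?thesis unfolding sunflower_base_def by (simp add: field_simps)
  qed
  have "real (card (low_degree I D)) * t powr (2 * real N / 3)
      = (\<Sum>p\<in>low_degree I D. t powr (2 * real N / 3))"
    by simp
  also have "\<dots> \<le> (\<Sum>p\<in>low_degree I D. t ^ mon_degree I p)"
  proof (rule sum_mono)
    fix p assume "p \<in> low_degree I D"
    then have "real (mon_degree I p) \<le> 2 * real N / 3" unfolding low_degree_def N_def by auto
    with t have "t powr (2 * real N / 3) \<le> t powr real (mon_degree I p)"
      by (intro powr_mono') auto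
    with t show "t powr (2 * real N / 3) \<le> t ^ mon_degree I p"
      by (simp add: powr_realpow)
  qed
  also have "\<dots> \<le> (\<Sum>p\<in>PiE I (\<lambda>_. {..<D}). t ^ mon_degree I p)"
    using \<open>finite I\<close> t by (intro sum_mono2) (auto simp: low_degree_def finite_PiE)
  also have "\<dots> = 3 ^ N"
    using sum_power_mon_degree[OF \<open>finite I\<close>, of D t] assms(2) t(3) unfolding N_def by simp
  finally have "real (card (low_degree I D)) * (t powr (2/3)) ^ N \<le> (sunflower_base D * t powr (2/3)) ^ N"
    unfolding t_powr base_t .
  with t show ?thesis unfolding N_def by (simp add: power_mult_distrib)
qed

section \<open>Sunflower-free sets\<close>

definition sunflower_free_on :: "'i set \<Rightarrow> ('i \<Rightarrow> 'a) set \<Rightarrow> bool" where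
  "sunflower_free_on I A \<longleftrightarrow> (\<forall>x\<in>A. \<forall>y\<in>A. \<forall>z\<in>A. x \<noteq> y \<and> y \<noteq> z \<and> x \<noteq> z \<longrightarrow>
     (\<exists>i\<in>I. exactly_two_eq (x i) (y i) (z i)))"

lemma sunflower_free_on_not_all_eq:
  assumes "sunflower_free_on I A" "A \<subseteq> extensional I"
    and "x \<in> A" "y \<in> A" "z \<in> A" "\<not> (x = y \<and> y = z)"
  obtains i where "i \<in> I" "exactly_two_eq (x i) (y i) (z i)"
proof -
  have differ: "\<exists>i\<in>I. u i \<noteq> v i" if "u \<in> A" "v \<in> A" "u \<noteq> v" for u v
    using that assms(2) extensionalityI[of u I v] by blast
  consider "x \<noteq> y" "y \<noteq> z" "x \<noteq> z" | "x = y" "y \<noteq> z" | "x \<noteq> y" "z = x \<or> z = y"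
    using assms(6) by blast
  then show ?thesis
  proof cases
    case 1
    with assms(1,3-5) that show ?thesis unfolding sunflower_free_on_def by blast
  next
    case 2
    with differ[of y z] assms(4,5) that show ?thesis by (auto simp: exactly_two_eq_def)
  next
    case 3
    with differ[of x y] assms(3,4) that show ?thesis by (auto simp: exactly_two_eq_def)
  qed
qed

lemma sunflower_tensor_on_sunflower_free:
  assumes "finite I" "sunflower_free_on I A" "A \<subseteq> extensional I" "x \<in> A" "y \<in> A" "z \<in> A"
  shows "sunflower_tensor I x y z = (if x = y \<and> y = z then (- 2) ^ card I else 0)"
proof (cases "x = y \<and> y = z")
  case True
  then show ?thesis by (simp add: sunflower_tensor_def sunflower_kernel_diag)
next
  case False
  then obtain i where "i \<in> I" "exactly_two_eq (x i) (y i) (z i)"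
    using sunflower_free_on_not_all_eq[OF assms(2-6)] by blast
  with False \<open>finite I\<close> show ?thesis
    unfolding sunflower_tensor_def by (metis prod_zero sunflower_kernel_eq_0)
qed

lemma monomial_restrict: "monomial I (restrict p I) = monomial I p"
  by (simp add: monomial_def fun_eq_iff)

lemma mon_degree_restrict: "mon_degree I (restrict p I) = mon_degree I p"
  unfolding mon_degree_def by (rule arg_cong[where f = card]) auto

lemma card_monomial_image_le:
  assumes "finite I" "\<And>\<tau>. \<tau> \<in> G \<Longrightarrow> restrict (e \<tau>) I \<in> low_degree I D"
  shows "card ((\<lambda>\<tau>. monomial I (e \<tau>)) ` G) \<le> card (low_degree I D)"
proof -
  have "finite (low_degree I D)"
    using \<open>finite I\<close> by (auto simp: low_degree_def finite_PiE)
  moreover have "(\<lambda>\<tau>. monomial I (e \<tau>)) ` G \<subseteq> monomial I ` low_degree I D"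
    using assms(2) by (metis image_subsetI image_eqI monomial_restrict)
  ultimately show ?thesis
    by (meson card_image_le card_mono finite_imageI le_trans)
qed

lemma restrict_term_exponent_in_low_degree:
  assumes "\<tau> \<in> PiE I (\<lambda>_. term_indices D)" "3 * mon_degree I (e \<circ> \<tau>) \<le> 2 * card I"
    and "\<And>k. k \<in> term_indices D \<Longrightarrow> e k < D"
  shows "restrict (e \<circ> \<tau>) I \<in> low_degree I D"
proof -
  have "e (\<tau> i) < D" if "i \<in> I" for i
    using that assms(1,3) by (blast dest: PiE_mem)
  with assms(2) show ?thesis
    unfolding low_degree_def by (simp add: mon_degree_restrict restrict_PiE_iff)
qed

lemma card_le_3_card_low_degree:
  assumes "finite I" "A \<subseteq> PiE I (\<lambda>_. {..<D})" "sunflower_free_on I A"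
  shows "card A \<le> 3 * card (low_degree I D)"
proof -
  define P where "P = PiE I (\<lambda>_. term_indices D)"
  define low where "low e \<longleftrightarrow> 3 * mon_degree I e \<le> 2 * card I" for e :: "'a \<Rightarrow> nat"
  define coef where "coef \<tau> = (\<Prod>i\<in>I. ecoeff3 sunflower_kernel (\<tau> i))" for \<tau>
  let ?e1 = "\<lambda>\<tau>. fst \<circ> \<tau>" and ?e2 = "\<lambda>\<tau>. fst \<circ> snd \<circ> \<tau>" and ?e3 = "\<lambda>\<tau>. snd \<circ> snd \<circ> \<tau>"
  \<comment> \<open>Each term is sliced along a variable in which its monomial has low degree.\<close>
  define G1 where "G1 = {\<tau>\<in>P. low (?e1 \<tau>)}"
  define G2 where "G2 = {\<tau>\<in>P. \<not> low (?e1 \<tau>) \<and> low (?e2 \<tau>)}"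
  define G3 where "G3 = {\<tau>\<in>P. \<not> low (?e1 \<tau>) \<and> \<not> low (?e2 \<tau>)}"
  have "finite P" unfolding P_def using \<open>finite I\<close> finite_term_indices by (simp add: finite_PiE)
  then have fin: "finite G1" "finite G2" "finite G3" unfolding G1_def G2_def G3_def by auto
  have G3_low: "low (?e3 \<tau>)" if "\<tau> \<in> G3" for \<tau>
    using that mon_degree_terms_le[OF \<open>finite I\<close>, of \<tau> D] unfolding G3_def P_def low_def by auto
  have "finite A"
    using finite_subset[OF assms(2)] assms(1) by (simp add: finite_PiE)
  have decomp: "(if x = y \<and> y = z then (- 2) ^ card I else 0) =
      (\<Sum>\<tau>\<in>G1. monomial I (?e1 \<tau>) x * (coef \<tau> * monomial I (?e2 \<tau>) y * monomial I (?e3 \<tau>) z)) +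
      (\<Sum>\<tau>\<in>G2. monomial I (?e2 \<tau>) y * (coef \<tau> * monomial I (?e1 \<tau>) x * monomial I (?e3 \<tau>) z)) +
      (\<Sum>\<tau>\<in>G3. monomial I (?e3 \<tau>) z * (coef \<tau> * monomial I (?e1 \<tau>) x * monomial I (?e2 \<tau>) y))"
    if "x \<in> A" "y \<in> A" "z \<in> A" for x y z
  proof -
    have "P = G1 \<union> G2 \<union> G3" "G1 \<inter> G2 = {}" "(G1 \<union> G2) \<inter> G3 = {}"
      unfolding G1_def G2_def G3_def by auto
    then have "(\<Sum>\<tau>\<in>P. F \<tau>) = (\<Sum>\<tau>\<in>G1. F \<tau>) + (\<Sum>\<tau>\<in>G2. F \<tau>) + (\<Sum>\<tau>\<in>G3. F \<tau>)" for F :: "_ \<Rightarrow> real"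
      using fin by (simp add: sum.union_disjoint)
    moreover have "(if x = y \<and> y = z then (- 2) ^ card I else 0) = sunflower_tensor I x y z"
      using sunflower_tensor_on_sunflower_free[OF \<open>finite I\<close> assms(3) _ that] assms(2)
      by (auto simp: PiE_def)
    moreover have "sunflower_tensor I x y z = (\<Sum>\<tau>\<in>P.
        coef \<tau> * monomial I (?e1 \<tau>) x * monomial I (?e2 \<tau>) y * monomial I (?e3 \<tau>) z)"
      unfolding P_def coef_def using that assms(2)
      by (intro sunflower_tensor_expansion[OF \<open>finite I\<close>]) auto
    ultimately show ?thesis by (simp add: mult_ac)
  qed
  have "card A \<le> card ((\<lambda>\<tau>. monomial I (?e1 \<tau>)) ` G1) + card ((\<lambda>\<tau>. monomial I (?e2 \<tau>)) ` G2)
      + card ((\<lambda>\<tau>. monomial I (?e3 \<tau>)) ` G3)"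
    by (rule card_le_slice_decomposition[where c = "\<lambda>_. (- 2) ^ card I", OF \<open>finite A\<close> fin _ decomp]) simp_all
  moreover have "card ((\<lambda>\<tau>. monomial I (?e1 \<tau>)) ` G1) \<le> card (low_degree I D)"
    using \<open>finite I\<close>
    by (intro card_monomial_image_le restrict_term_exponent_in_low_degree) (auto simp: G1_def P_def low_def term_indices_def)
  moreover have "card ((\<lambda>\<tau>. monomial I (?e2 \<tau>)) ` G2) \<le> card (low_degree I D)"
    using \<open>finite I\<close>
    by (intro card_monomial_image_le restrict_term_exponent_in_low_degree) (auto simp: G2_def P_def low_def term_indices_def)
  moreover have "card ((\<lambda>\<tau>. monomial I (?e3 \<tau>)) ` G3) \<le> card (low_degree I D)"
    using \<open>finite I\<close> G3_low
    by (intro card_monomial_image_le restrict_term_exponent_in_low_degree) (auto simp: G3_def P_def low_def term_indices_def)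
  ultimately show ?thesis by linarith
qed

lemma sunflower_free_on_tensor_power:
  fixes A :: "('i \<Rightarrow> nat) set"
  assumes "A \<subseteq> PiE I (\<lambda>_. {..<D})" "sunflower_free_on I A"
  obtains B where "B \<subseteq> PiE (I \<times> {..<m}) (\<lambda>_. {..<D})" "sunflower_free_on (I \<times> {..<m}) B"
    "card B = card A ^ m"
proof -
  define glue :: "(nat \<Rightarrow> 'i \<Rightarrow> nat) \<Rightarrow> 'i \<times> nat \<Rightarrow> nat"
    where "glue xs = restrict (\<lambda>(i, j). xs j i) (I \<times> {..<m})" for xs
  define As where "As = PiE {..<m} (\<lambda>_. A)"
  have "A \<subseteq> extensional I"
    using assms(1) by (auto simp: PiE_def)
  have differ: "\<exists>j<m. xs j \<noteq> ys j" if "xs \<in> As" "ys \<in> As" "xs \<noteq> ys" for xs ys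
    using that PiE_ext[of xs "{..<m}" "\<lambda>_. A" ys] unfolding As_def by auto
  have "inj_on glue As"
  proof (rule inj_onI)
    fix xs ys assume xs: "xs \<in> As" and ys: "ys \<in> As" and "glue xs = glue ys"
    then have "xs j i = ys j i" if "i \<in> I" "j < m" for i j
      using that unfolding glue_def by (metis (no_types) case_prod_conv mem_Sigma_iff lessThan_iff restrict_apply')
    then have "xs j = ys j" if "j < m" for j
      using that xs ys \<open>A \<subseteq> extensional I\<close> unfolding As_def by (intro extensionalityI) auto
    then show "xs = ys"
      using xs ys unfolding As_def by (intro PiE_ext) auto
  qed
  show ?thesis
  proof
    show "glue ` As \<subseteq> PiE (I \<times> {..<m}) (\<lambda>_. {..<D})"
      using assms(1) unfolding glue_def As_def by (auto simp: restrict_PiE_iff PiE_iff)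
    show "card (glue ` As) = card A ^ m"
      using card_image[OF \<open>inj_on glue As\<close>] unfolding As_def by (simp add: card_PiE)
    show "sunflower_free_on (I \<times> {..<m}) (glue ` As)"
      unfolding sunflower_free_on_def
    proof (intro ballI impI)
      fix b1 b2 b3 assume "b1 \<in> glue ` As" "b2 \<in> glue ` As" "b3 \<in> glue ` As"
        and distinct: "b1 \<noteq> b2 \<and> b2 \<noteq> b3 \<and> b1 \<noteq> b3"
      then obtain xs ys zs where xyz: "xs \<in> As" "ys \<in> As" "zs \<in> As"
        and b: "b1 = glue xs" "b2 = glue ys" "b3 = glue zs"
        by blast
      then obtain j where "j < m" "xs j \<noteq> ys j"
        using differ distinct by blast
      moreover have "xs j \<in> A" "ys j \<in> A" "zs j \<in> A"
        using xyz \<open>j < m\<close> unfolding As_def by auto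
      ultimately obtain i where "i \<in> I" "exactly_two_eq (xs j i) (ys j i) (zs j i)"
        using sunflower_free_on_not_all_eq[OF assms(2) \<open>A \<subseteq> extensional I\<close>] by metis
      with \<open>j < m\<close> b show "\<exists>ij\<in>I \<times> {..<m}. exactly_two_eq (b1 ij) (b2 ij) (b3 ij)"
        unfolding glue_def by (intro bexI[of _ "(i, j)"]) auto
    qed
  qed
qed

lemma le_if_powers_le_const_mult:
  fixes r K C :: real
  assumes "K > 0" "\<And>m. r ^ m \<le> C * K ^ m"
  shows "r \<le> K"
proof (rule ccontr)
  assume "\<not> r \<le> K"
  with assms(1) have "r / K > 1" by simp
  then obtain m where "C < (r / K) ^ m" using real_arch_pow by blast
  with assms(1) have "C * K ^ m < r ^ m" by (simp add: power_divide field_simps)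
  with assms(2)[of m] show False by simp
qed

lemma sunflower_free_on_card_le:
  fixes A :: "('i \<Rightarrow> nat) set"
  assumes "finite I" "D \<ge> 3" "A \<subseteq> PiE I (\<lambda>_. {..<D})" "sunflower_free_on I A"
  shows "real (card A) \<le> sunflower_base D ^ card I"
proof (rule le_if_powers_le_const_mult)
  show "sunflower_base D ^ card I > 0"
    using assms(2) by (simp add: sunflower_base_def)
  fix m
  \<comment> \<open>Tensor power trick: the constant factor 3 is lost only once for A^m.\<close>
  obtain B where B: "B \<subseteq> PiE (I \<times> {..<m}) (\<lambda>_. {..<D})" "sunflower_free_on (I \<times> {..<m}) B"
      "card B = card A ^ m"
    using sunflower_free_on_tensor_power[OF assms(3,4)] by blast
  have "real (card A) ^ m = real (card B)"
    using B(3) by simp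
  also have "\<dots> \<le> 3 * real (card (low_degree (I \<times> {..<m}) D))"
    using card_le_3_card_low_degree[OF _ B(1,2)] \<open>finite I\<close> by simp
  also have "\<dots> \<le> 3 * sunflower_base D ^ card (I \<times> {..<m})"
    using card_low_degree_le[of "I \<times> {..<m}" D] \<open>finite I\<close> assms(2) by simp
  also have "\<dots> = 3 * (sunflower_base D ^ card I) ^ m"
    by (simp add: card_cartesian_product power_mult)
  finally show "real (card A) ^ m \<le> 3 * (sunflower_base D ^ card I) ^ m" .
qed

lemma inj_on_restrict_ZDn: "inj_on (\<lambda>x. restrict x {..<n}) (ZDn D n)"
proof (rule inj_onI)
  fix x y assume "x \<in> ZDn D n" "y \<in> ZDn D n" and eq: "restrict x {..<n} = restrict y {..<n}"
  show "x = y"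
  proof
    fix i
    show "x i = y i"
    proof (cases "i < n")
      case True
      then show ?thesis using fun_cong[OF eq, of i] by simp
    next
      case False
      with \<open>x \<in> ZDn D n\<close> \<open>y \<in> ZDn D n\<close> show ?thesis by (simp add: ZDn_def)
    qed
  qed
qed

theorem theorem1p5:
  fixes D n :: nat and A :: "(nat \<Rightarrow> nat) set"
  assumes "D \<ge> 3" and "n \<ge> 1"
    and "A \<subseteq> ZDn D n"
    and "sunflower_free n A"
  shows "real (card A) \<le> (3 / 2 powr (2/3) * (real D - 1) powr (2/3)) ^ n"
proof -
  let ?r = "\<lambda>x. restrict x {..<n}"
  have inj: "inj_on ?r A"
    using inj_on_restrict_ZDn assms(3) by (rule inj_on_subset)
  have "?r ` A \<subseteq> PiE {..<n} (\<lambda>_. {..<D})"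
    using assms(3) unfolding ZDn_def by (intro image_subsetI) (auto simp: restrict_PiE_iff)
  moreover have "sunflower_free_on {..<n} (?r ` A)"
    using assms(4) inj unfolding sunflower_free_def sunflower_free_on_def exactly_two_eq_def
    by (simp add: inj_on_eq_iff) (metis lessThan_iff)
  ultimately have "real (card (?r ` A)) \<le> sunflower_base D ^ n"
    using sunflower_free_on_card_le[of "{..<n}" D] assms(1) by simp
  with inj show ?thesis
    by (simp add: card_image sunflower_base_def)
qed

end
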